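(* Let $n,m\ge1$, $c_1,\dots,c_n>0$, $T>0$, $\epsilon>0$, $r_1,\dots,r_m>0$ constant, and $\kappa_{ij}\ge0$. Define: - $\mu_j(q_j)=0$ if $q_j\le c_j$ and $\mu_j(q_j)=T(1-c_j/q_j)$ if $q_j>c_j$ (i.e. $\mu_j(q_j)=T[1-c_j/q_j]^+$); - for $\mu\in\mathbb{R}^n$, $\delta_{ij}(\mu)=\dfrac{e^{-(\kappa_{ij}+\mu_j)/\epsilon}}{\sum_{k=1}^n e^{-(\kappa_{ik}+\mu_k)/\epsilon}}$; - $\beta_j(q_j)=0$ if $q_j\le c_j$, $\beta_j(q_j)=q_j-c_j-c_j\log(q_j/c_j)$ if $q_j>c_j$. Consider the dynamical system in $q\in\mathbb{R}^n$: $$\dot q_j=\sum_{i=1}^m x_{ij}-\frac{q_j}{T},\qquad \mu_j=\mu_j(q_j),\qquad x_{ij}=r_i\,\delta_{ij}(\mu),$$ and call $(X^*,q^*,\mu^* )$ an equilibrium point if $\mu^*_j=\mu_j(q^*_j)$, $x^*_{ij}=r_i\delta_{ij}(\mu^* )$ and $\sum_i x^*_{ij}=q^*_j/T$ for all $i,j$. Define the Lagrangian $$L(X,q,\mu)=\sum_{i,j}\kappa_{ij}x_{ij}+\sum_j\beta_j(q_j)+\epsilon\sum_{i,j}x_{ij}\log\Big(\frac{x_{ij}}{r_i}\Big)+\sum_j\mu_j\Big[\sum_i x_{ij}-\frac{q_j}{T}\Big]$$ for $X$ in the set $S=\{X: x_{ij}\ge0,\ \sum_j x_{ij}=r_i\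 \forall i\}$, $q\in\mathbb{R}^n$, $\mu\in\mathbb{R}^n$, and call $(X^*,q^*,\mu^* )$ a saddle point of $L$ if $(X^*,q^* )$ minimizes $L(\cdot,\cdot,\mu^* )$ over $S\times\mathbb{R}^n$ and $\mu^*$ maximizes $L(X^*,q^*,\cdot)$ over $\mathbb{R}^n$. Then the following are equivalent: (i) $(X^*,q^*,\mu^* )$ is a saddle point of $L$; (ii) $(X^*,q^*,\mu^* )$ is an equilibrium point of the dynamics. In particular, the dynamics have a unique equilibrium point.
   Context: Convention $0\log0=0$. The dynamics model queues $q_j$ at $n$ EV charging stations with capacities $c_j$, fed by requests from $m$ locations at rates $r_i$ with travel times $\kappa_{ij}$, mean sojourn time $T$, waiting delays $\mu_j$, and soft-min (logit) station selection with parameter $\epsilon$. *)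

theory Defs
  imports Complex_Main
begin

text \<open>Indices: stations j < n, locations i < m. Vectors are nat => real,
  X is nat => nat => real with X i j = x_ij. Note ln 0 = 0 in Isabelle,
  so x * ln (x / r) realises the convention 0 log 0 = 0.\<close>

definition mu_fn :: "real \<Rightarrow> real \<Rightarrow> real \<Rightarrow> real" where
  "mu_fn T c q = (if q \<le> c then 0 else T * (1 - c / q))"

definition delta :: "nat \<Rightarrow> (nat \<Rightarrow> nat \<Rightarrow> real) \<Rightarrow> real \<Rightarrow> (nat \<Rightarrow> real) \<Rightarrow> nat \<Rightarrow> nat \<Rightarrow> real" where
  "delta n kappa eps mu i j =
     exp (- (kappa i j + mu j) / eps) / (\<Sum>k<n. exp (- (kappa i k + mu k) / eps))"

definition beta :: "real \<Rightarrow> real \<Rightarrow> real" where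
  "beta c q = (if q \<le> c then 0 else q - c - c * ln (q / c))"

definition lagr :: "nat \<Rightarrow> nat \<Rightarrow> (nat \<Rightarrow> nat \<Rightarrow> real) \<Rightarrow> (nat \<Rightarrow> real) \<Rightarrow> real \<Rightarrow> real
    \<Rightarrow> (nat \<Rightarrow> real) \<Rightarrow> (nat \<Rightarrow> nat \<Rightarrow> real) \<Rightarrow> (nat \<Rightarrow> real) \<Rightarrow> (nat \<Rightarrow> real) \<Rightarrow> real" where
  "lagr n m kappa c T eps r X q mu =
     (\<Sum>i<m. \<Sum>j<n. kappa i j * X i j)
     + (\<Sum>j<n. beta (c j) (q j))
     + eps * (\<Sum>i<m. \<Sum>j<n. X i j * ln (X i j / r i))
     + (\<Sum>j<n. mu j * ((\<Sum>i<m. X i j) - q j / T))"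

definition inS :: "nat \<Rightarrow> nat \<Rightarrow> (nat \<Rightarrow> real) \<Rightarrow> (nat \<Rightarrow> nat \<Rightarrow> real) \<Rightarrow> bool" where
  "inS n m r X \<longleftrightarrow> (\<forall>i<m. \<forall>j<n. 0 \<le> X i j) \<and> (\<forall>i<m. (\<Sum>j<n. X i j) = r i)"

definition saddle_point where
  "saddle_point n m kappa c T eps r Xs qs mus \<longleftrightarrow>
     inS n m r Xs
     \<and> (\<forall>X q. inS n m r X \<longrightarrow>
            lagr n m kappa c T eps r Xs qs mus \<le> lagr n m kappa c T eps r X q mus)
     \<and> (\<forall>mu. lagr n m kappa c T eps r Xs qs mu \<le> lagr n m kappa c T eps r Xs qs mus)"

definition equilibrium where
  "equilibrium n m kappa c T eps r Xs qs mus \<longleftrightarrow>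
     (\<forall>j<n. mus j = mu_fn T (c j) (qs j))
     \<and> (\<forall>i<m. \<forall>j<n. Xs i j = r i * delta n kappa eps mus i j)
     \<and> (\<forall>j<n. (\<Sum>i<m. Xs i j) = qs j / T)"

end

theory Submission
  imports Defs
begin

(*
  The Lagrangian splits as L(X,q,\<mu>) = \<Phi>(X,\<mu>) + \<Psi>(q,\<mu>) and is affine in \<mu> with
  slopes \<Sum>\<^sub>i x\<^sub>i\<^sub>j - q\<^sub>j/T, so maximality in \<mu> is exactly flow balance. For fixed \<mu>,
  \<Phi>(X,\<mu>) - \<Phi>(G,\<mu>) with G\<^sub>i\<^sub>j = r\<^sub>i \<delta>\<^sub>i\<^sub>j(\<mu>) is \<epsilon> times a sum of Kullback-Leibler
  terms, so the logit flow G is the unique minimiser over S. The queue part separates over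
  stations, and \<beta>\<^sub>j is convex and C\<^sup>1 with T \<beta>\<^sub>j'(q) = \<mu>\<^sub>j(q), so q\<^sub>j minimises
  \<beta>\<^sub>j(q\<^sub>j) - \<mu>\<^sub>j q\<^sub>j/T exactly when \<mu>\<^sub>j = \<mu>\<^sub>j(q\<^sub>j).

  An equilibrium is determined by its prices, which solve \<mu>\<^sub>j = \<mu>\<^sub>j(T F\<^sub>j(\<mu>)) with
  F\<^sub>j(\<mu>) = \<Sum>\<^sub>i r\<^sub>i \<delta>\<^sub>i\<^sub>j(\<mu>) the demand at station j. Making j relatively dearer lowers F\<^sub>j
  and hence the price \<mu>\<^sub>j(T F\<^sub>j); comparing two solutions at a station where their
  difference is largest gives uniqueness. For existence, the self-consistent price of
  station j given the other prices exists by the intermediate value theorem and is monotone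
  in the other prices; a monotone self-map of the box [0,T]\<^sup>n has a fixed point (Tarski:
  the coordinatewise supremum of the points lying below their image).
*)

section \<open>Waiting delay and queue cost\<close>

lemma mu_fn_eq_max: "c > 0 \<Longrightarrow> mu_fn T c q = T * (1 - c / max c q)"
  by (auto simp: mu_fn_def max_def)

lemma mu_fn_scale: "mu_fn T c q = T * mu_fn 1 c q"
  by (simp add: mu_fn_def)

lemma mu_fn_mono: "c > 0 \<Longrightarrow> T \<ge> 0 \<Longrightarrow> mono (mu_fn T c)"
  by (intro monoI, unfold mu_fn_eq_max)
    (intro mult_left_mono diff_left_mono divide_left_mono, auto simp: max_def)

lemma mu_fn_nonneg: "c > 0 \<Longrightarrow> T > 0 \<Longrightarrow> 0 \<le> mu_fn T c q"
  by (simp add: mu_fn_def field_simps)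

lemma mu_fn_less: "c > 0 \<Longrightarrow> T > 0 \<Longrightarrow> mu_fn T c q < T"
  by (simp add: mu_fn_def field_simps)

lemma continuous_on_mu_fn:
  assumes "c > 0" shows "continuous_on A (mu_fn T c)"
proof -
  have "continuous_on A (\<lambda>q. T * (1 - c / max c q))"
    using assms by (intro continuous_intros) auto
  then show ?thesis using mu_fn_eq_max[OF assms] by simp
qed

lemma has_real_derivative_at_split:
  "(f has_real_derivative D) (at x) \<longleftrightarrow>
     (f has_real_derivative D) (at_left x) \<and> (f has_real_derivative D) (at_right x)"
  by (simp add: has_field_derivative_iff filterlim_at_split)

lemma beta_has_real_derivative:
  assumes c: "c > 0"
  shows "(beta c has_real_derivative mu_fn 1 c q) (at q)"
proof -
  define g where "g q = q - c - c * ln (q / c)" for q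
  have g: "(g has_real_derivative 1 - c / q) (at q)" if "q > 0" for q
    unfolding g_def using that c by (auto intro!: derivative_eq_intros simp: field_simps)
  have left: "(beta c has_real_derivative 0) (at_left c)"
  proof -
    have "\<forall>\<^sub>F y in at_left c. 0 = beta c y"
      by (auto simp: eventually_at_filter beta_def)
    then show ?thesis
      by (subst has_field_derivative_cong_eventually[symmetric]) (auto simp: beta_def)
  qed
  have right: "(beta c has_real_derivative 0) (at_right c)"
  proof -
    have "(g has_real_derivative 0) (at_right c)"
      using has_field_derivative_at_within[OF g[of c]] c by simp
    moreover have "\<forall>\<^sub>F y in at_right c. g y = beta c y"
      by (auto simp: eventually_at_filter beta_def g_def)
    ultimately show ?thesis
      by (subst has_field_derivative_cong_eventually[symmetric]) (auto simp: beta_def g_def)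
  qed
  consider "q < c" | "q = c" | "q > c" by linarith
  then show ?thesis
  proof cases
    case 1
    have "\<forall>\<^sub>F y in nhds q. (\<lambda>_. 0) y = beta c y"
      using eventually_nhds_in_open[of "{..<c}" q] 1
      by (auto elim!: eventually_mono simp: beta_def)
    moreover have "((\<lambda>_. 0) has_real_derivative 0) (at q)" by simp
    ultimately show ?thesis
      using 1 DERIV_cong_ev by (fastforce simp: mu_fn_def)
  next
    case 2
    then show ?thesis using left right by (simp add: has_real_derivative_at_split mu_fn_def)
  next
    case 3
    have "\<forall>\<^sub>F y in nhds q. g y = beta c y"
      using eventually_nhds_in_open[of "{c<..}" q] 3
      by (auto elim!: eventually_mono simp: beta_def g_def)
    then show ?thesis
      using g[of q] 3 c DERIV_cong_ev by (fastforce simp: mu_fn_def)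
  qed
qed

lemma min_at_zero_of_mono_derivative:
  fixes f f' :: "real \<Rightarrow> real"
  assumes deriv: "\<And>x. (f has_real_derivative f' x) (at x)"
    and mono: "mono f'" and zero: "f' s = 0"
  shows "f s \<le> f t"
proof -
  have cont: "continuous_on A f" for A
    using deriv by (meson DERIV_continuous continuous_at_imp_continuous_on)
  show ?thesis
  proof (cases "s \<le> t")
    case True
    show ?thesis
    proof (rule DERIV_nonneg_imp_increasing_open[OF True _ cont])
      fix x assume "s < x"
      then show "\<exists>y. (f has_real_derivative y) (at x) \<and> y \<ge> 0"
        using deriv monoD[OF mono, of s x] zero by auto
    qed
  next
    case False
    show ?thesis
    proof (rule DERIV_nonpos_imp_decreasing_open[of t s, OF _ _ cont])
      fix x assume "x < s"
      then show "\<exists>y. (f has_real_derivative y) (at x) \<and> y \<le> 0"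
        using deriv monoD[OF mono, of x s] zero by auto
    qed (use False in auto)
  qed
qed

lemma beta_minus_linear_min_iff:
  assumes c: "c > 0" and T: "T > 0"
  shows "(\<forall>t. beta c s - mu * s / T \<le> beta c t - mu * t / T) \<longleftrightarrow> mu = mu_fn T c s"
proof -
  define h where "h t = beta c t - mu * t / T" for t
  have deriv: "(h has_real_derivative mu_fn 1 c t - mu / T) (at t)" for t
    unfolding h_def using T by (auto intro!: derivative_eq_intros beta_has_real_derivative[OF c])
  have critical: "mu_fn 1 c s - mu / T = 0 \<longleftrightarrow> mu = mu_fn T c s"
    using T mu_fn_scale[of T c s] by (auto simp: field_simps)
  show ?thesis
  proof
    assume "\<forall>t. beta c s - mu * s / T \<le> beta c t - mu * t / T"
    then have "mu_fn 1 c s - mu / T = 0"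
      by (intro DERIV_local_min[OF deriv, of 1]) (auto simp: h_def)
    then show "mu = mu_fn T c s" using critical by blast
  next
    assume "mu = mu_fn T c s"
    moreover have "mono (\<lambda>t. mu_fn 1 c t - mu / T)"
      using monoD[OF mu_fn_mono[OF c, of 1]] by (auto intro: monoI)
    ultimately have "h s \<le> h t" for t
      using critical by (intro min_at_zero_of_mono_derivative[OF deriv]) auto
    then show "\<forall>t. beta c s - mu * s / T \<le> beta c t - mu * t / T" by (simp add: h_def)
  qed
qed

section \<open>Relative entropy and the logit choice\<close>

definition kl_term :: "real \<Rightarrow> real \<Rightarrow> real" where
  "kl_term x y = x * ln (x / y) - x + y"

lemma kl_term_self [simp]: "kl_term y y = 0"
  by (cases "y = 0") (simp_all add: kl_term_def)

lemma kl_term_pos: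
  assumes "0 \<le> x" "0 < y" "x \<noteq> y"
  shows "kl_term x y > 0"
proof (cases "x = 0")
  case False
  then have "x > 0" using assms by simp
  then have "ln y - ln x < (y - x) / x" using ln_diff_less[of y x] assms by auto
  then have "x * (ln y - ln x) < y - x" using \<open>x > 0\<close> by (simp add: field_simps)
  then show ?thesis using \<open>x > 0\<close> assms by (simp add: kl_term_def ln_div algebra_simps)
qed (use assms in \<open>simp add: kl_term_def\<close>)

lemma kl_term_nonneg: "0 \<le> x \<Longrightarrow> 0 < y \<Longrightarrow> kl_term x y \<ge> 0"
  using kl_term_pos[of x y] by (cases "x = y") auto

(* Summed over a row of S
   (where the x sum to r and the g sum to r), the last two terms add up to -eps * r * ln Z,
   which does not depend on x: this is the Gibbs variational principle. *)
lemma entropy_term_eq_kl_term: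
  fixes a x r Z eps :: real
  assumes "0 \<le> x" "0 < r" "0 < Z" "0 < eps"
  defines "g \<equiv> r * exp (- a / eps) / Z"
  shows "a * x + eps * (x * ln (x / r)) = eps * kl_term x g - eps * ln Z * x + eps * (x - g)"
proof (cases "x = 0")
  case False
  have "ln g = ln r - a / eps - ln Z"
    unfolding g_def using assms(2-4) by (simp add: ln_div ln_mult)
  moreover have "g > 0" unfolding g_def using assms(2-4) by simp
  ultimately have "eps * ln (x / g) = a + eps * ln (x / r) + eps * ln Z"
    using assms(1,2,4) False by (simp add: ln_div field_simps)
  then have "eps * (x * ln (x / g)) = x * (a + eps * ln (x / r) + eps * ln Z)"
    by (metis mult.left_commute)
  then show ?thesis by (simp add: kl_term_def algebra_simps)
qed (simp add: kl_term_def)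

lemma sum_exp_pos: "(n::nat) \<ge> 1 \<Longrightarrow> (\<Sum>k<n. exp (f k :: real)) > 0"
  by (rule sum_pos) (auto simp: lessThan_empty_iff)

lemma delta_pos: "n \<ge> 1 \<Longrightarrow> delta n kappa eps mu i j > 0"
  unfolding delta_def by (intro divide_pos_pos sum_exp_pos) auto

lemma sum_delta: "n \<ge> 1 \<Longrightarrow> (\<Sum>j<n. delta n kappa eps mu i j) = 1"
  unfolding delta_def using sum_exp_pos[of n "\<lambda>k. - (kappa i k + mu k) / eps"]
  by (simp add: sum_divide_distrib[symmetric])

lemma delta_cong:
  "\<forall>k<n. mu k = mu' k \<Longrightarrow> j < n \<Longrightarrow> delta n kappa eps mu i j = delta n kappa eps mu' i j"
  unfolding delta_def by simp

lemma delta_eq_inverse: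
  assumes "j < n"
  shows "delta n kappa eps mu i j = 1 / (\<Sum>k<n. exp ((kappa i j + mu j - kappa i k - mu k) / eps))"
proof -
  let ?e = "exp (- (kappa i j + mu j) / eps)"
  have "(\<Sum>k<n. exp (- (kappa i k + mu k) / eps))
      = (\<Sum>k<n. ?e * exp ((kappa i j + mu j - kappa i k - mu k) / eps))"
    by (intro sum.cong refl) (simp add: exp_add[symmetric] diff_divide_distrib add_divide_distrib)
  then show ?thesis by (simp add: delta_def sum_distrib_left[symmetric])
qed

lemma delta_mono:
  assumes j: "j < n" and eps: "eps > 0" and le: "\<forall>k<n. mu' j - mu' k \<le> mu j - mu k"
  shows "delta n kappa eps mu i j \<le> delta n kappa eps mu' i j"
proof -
  let ?S = "\<lambda>mu. \<Sum>k<n. exp ((kappa i j + mu j - kappa i k - mu k) / eps)"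
  have "?S mu' \<le> ?S mu"
    using le eps by (intro sum_mono) (auto intro!: divide_right_mono)
  moreover have "?S mu' > 0" using j by (intro sum_exp_pos) auto
  ultimately show ?thesis unfolding delta_eq_inverse[OF j] by (intro divide_left_mono) auto
qed

section \<open>Saddle points\<close>

lemma separable_add_min_iff:
  fixes f :: "'a \<Rightarrow> 'c::ordered_ab_group_add" and g :: "'b \<Rightarrow> 'c"
  assumes "P x"
  shows "(\<forall>y z. P y \<longrightarrow> f x + g w \<le> f y + g z) \<longleftrightarrow> (\<forall>y. P y \<longrightarrow> f x \<le> f y) \<and> (\<forall>z. g w \<le> g z)"
proof (intro iffI conjI allI impI)
  assume min: "\<forall>y z. P y \<longrightarrow> f x + g w \<le> f y + g z"
  show "f x \<le> f y" if "P y" for y using min that by (metis add_le_cancel_right)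
  show "g w \<le> g z" for z using min assms by (metis add_le_cancel_left)
qed (auto intro: add_mono)

lemma sum_separable_min_iff:
  fixes f :: "nat \<Rightarrow> 'a \<Rightarrow> 'b::ordered_ab_group_add"
  shows "(\<forall>y. (\<Sum>k<n. f k (x k)) \<le> (\<Sum>k<n. f k (y k))) \<longleftrightarrow> (\<forall>k<n. \<forall>t. f k (x k) \<le> f k t)"
proof
  assume min: "\<forall>y. (\<Sum>k<n. f k (x k)) \<le> (\<Sum>k<n. f k (y k))"
  show "\<forall>k<n. \<forall>t. f k (x k) \<le> f k t"
  proof (intro allI impI)
    fix k t assume k: "k < n"
    have split: "(\<Sum>i<n. f i (y i)) = f k (y k) + (\<Sum>i\<in>{..<n} - {k}. f i (y i))" for y
      using k by (simp add: sum.remove)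
    have "(\<Sum>i\<in>{..<n} - {k}. f i ((x(k := t)) i)) = (\<Sum>i\<in>{..<n} - {k}. f i (x i))"
      by (intro sum.cong) auto
    then show "f k (x k) \<le> f k t"
      using min[rule_format, of "x(k := t)"] split[of x] split[of "x(k := t)"] by simp
  qed
qed (auto intro: sum_mono)

lemma sum_linear_max_iff:
  fixes a x :: "nat \<Rightarrow> real"
  shows "(\<forall>y. (\<Sum>k<n. y k * a k) \<le> (\<Sum>k<n. x k * a k)) \<longleftrightarrow> (\<forall>k<n. a k = 0)"
proof
  assume max: "\<forall>y. (\<Sum>k<n. y k * a k) \<le> (\<Sum>k<n. x k * a k)"
  show "\<forall>k<n. a k = 0"
  proof (intro allI impI)
    fix k assume k: "k < n"
    have "(\<Sum>i<n. (x(k := x k + a k)) i * a i) = (\<Sum>i<n. x i * a i + (if i = k then a k * a k else 0))"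
      by (intro sum.cong) (auto simp: algebra_simps)
    also have "\<dots> = (\<Sum>i<n. x i * a i) + a k * a k"
      using k by (simp add: sum.distrib)
    finally have "a k * a k \<le> 0" using max[rule_format, of "x(k := x k + a k)"] by simp
    then show "a k = 0" by (metis antisym mult_eq_0_iff zero_le_square)
  qed
qed simp

locale charging_network =
  fixes n m :: nat and kappa :: "nat \<Rightarrow> nat \<Rightarrow> real" and c r :: "nat \<Rightarrow> real" and T eps :: real
  assumes n_pos: "n \<ge> 1" and c_pos: "\<And>j. j < n \<Longrightarrow> c j > 0" and T_pos: "T > 0"
    and eps_pos: "eps > 0" and r_pos: "\<And>i. i < m \<Longrightarrow> r i > 0"
begin

abbreviation logit_flow :: "(nat \<Rightarrow> real) \<Rightarrow> nat \<Rightarrow> nat \<Rightarrow> real" where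
  "logit_flow mu i j \<equiv> r i * delta n kappa eps mu i j"

definition lagr_flow :: "(nat \<Rightarrow> nat \<Rightarrow> real) \<Rightarrow> (nat \<Rightarrow> real) \<Rightarrow> real" where
  "lagr_flow X mu = (\<Sum>i<m. \<Sum>j<n. (kappa i j + mu j) * X i j + eps * (X i j * ln (X i j / r i)))"

definition lagr_queue :: "(nat \<Rightarrow> real) \<Rightarrow> (nat \<Rightarrow> real) \<Rightarrow> real" where
  "lagr_queue q mu = (\<Sum>j<n. beta (c j) (q j) - mu j * q j / T)"

lemma lagr_eq_flow_plus_queue: "lagr n m kappa c T eps r X q mu = lagr_flow X mu + lagr_queue q mu"
proof -
  have "(\<Sum>j<n. mu j * ((\<Sum>i<m. X i j) - q j / T))
      = (\<Sum>i<m. \<Sum>j<n. mu j * X i j) - (\<Sum>j<n. mu j * q j / T)"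
    by (simp add: right_diff_distrib sum_subtractf sum_distrib_left sum.swap[of _ "{..<n}"])
  then show ?thesis
    by (simp add: lagr_def lagr_flow_def lagr_queue_def sum.distrib sum_subtractf
        sum_distrib_left algebra_simps)
qed

lemma sum_logit_flow: "(\<Sum>j<n. logit_flow mu i j) = r i"
  using sum_delta[OF n_pos] by (simp add: sum_distrib_left[symmetric])

lemma logit_flow_in_S: "inS n m r (logit_flow mu)"
  unfolding inS_def using delta_pos[OF n_pos] r_pos sum_logit_flow by (simp add: less_imp_le)

lemma lagr_flow_excess_eq_kl:
  assumes "inS n m r X"
  shows "lagr_flow X mu - lagr_flow (logit_flow mu) mu
       = eps * (\<Sum>i<m. \<Sum>j<n. kl_term (X i j) (logit_flow mu i j))"
proof -
  define Z where "Z i = (\<Sum>k<n. exp (- (kappa i k + mu k) / eps))" for i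
  have expand: "lagr_flow Y mu = eps * (\<Sum>i<m. \<Sum>j<n. kl_term (Y i j) (logit_flow mu i j))
      - eps * (\<Sum>i<m. ln (Z i) * r i)" if Y: "inS n m r Y" for Y
  proof -
    have "(kappa i j + mu j) * Y i j + eps * (Y i j * ln (Y i j / r i))
        = eps * kl_term (Y i j) (logit_flow mu i j) - eps * ln (Z i) * Y i j
          + eps * (Y i j - logit_flow mu i j)" if "i < m" "j < n" for i j
      using entropy_term_eq_kl_term[of "Y i j" "r i" "Z i" eps "kappa i j + mu j"]
        Y that r_pos eps_pos sum_exp_pos[OF n_pos]
      by (simp add: inS_def delta_def Z_def)
    then have "lagr_flow Y mu = (\<Sum>i<m. \<Sum>j<n. eps * kl_term (Y i j) (logit_flow mu i j)
        - eps * ln (Z i) * Y i j + eps * (Y i j - logit_flow mu i j))"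
      unfolding lagr_flow_def by (intro sum.cong refl) auto
    also have "\<dots> = (\<Sum>i<m. eps * (\<Sum>j<n. kl_term (Y i j) (logit_flow mu i j))
        - eps * ln (Z i) * (\<Sum>j<n. Y i j) + eps * ((\<Sum>j<n. Y i j) - (\<Sum>j<n. logit_flow mu i j)))"
      by (simp add: sum.distrib sum_subtractf sum_distrib_left right_diff_distrib)
    also have "\<dots> = (\<Sum>i<m. eps * (\<Sum>j<n. kl_term (Y i j) (logit_flow mu i j))
        - eps * (ln (Z i) * r i))"
      using Y sum_logit_flow by (intro sum.cong refl) (simp add: inS_def)
    finally show ?thesis by (simp add: sum_subtractf sum_distrib_left)
  qed
  show ?thesis using expand[OF assms] expand[OF logit_flow_in_S] by simp
qed

lemma lagr_flow_min_iff:
  assumes Xs: "inS n m r Xs"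
  shows "(\<forall>X. inS n m r X \<longrightarrow> lagr_flow Xs mu \<le> lagr_flow X mu)
     \<longleftrightarrow> (\<forall>i<m. \<forall>j<n. Xs i j = logit_flow mu i j)"
proof
  assume min: "\<forall>X. inS n m r X \<longrightarrow> lagr_flow Xs mu \<le> lagr_flow X mu"
  show "\<forall>i<m. \<forall>j<n. Xs i j = logit_flow mu i j"
  proof (rule ccontr)
    assume "\<not> ?thesis"
    then obtain i0 j0 where ij: "i0 < m" "j0 < n" "Xs i0 j0 \<noteq> logit_flow mu i0 j0" by blast
    have kl_nonneg: "kl_term (Xs i j) (logit_flow mu i j) \<ge> 0" if "i < m" "j < n" for i j
      using Xs that r_pos delta_pos[OF n_pos] by (intro kl_term_nonneg) (auto simp: inS_def)
    have "kl_term (Xs i0 j0) (logit_flow mu i0 j0) > 0"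
      using Xs ij r_pos delta_pos[OF n_pos] by (intro kl_term_pos) (auto simp: inS_def)
    then have "(\<Sum>j<n. kl_term (Xs i0 j) (logit_flow mu i0 j)) > 0"
      using ij kl_nonneg by (intro sum_pos2[of _ j0]) auto
    then have "(\<Sum>i<m. \<Sum>j<n. kl_term (Xs i j) (logit_flow mu i j)) > 0"
      using ij kl_nonneg by (intro sum_pos2[of "{..<m}" i0]) (auto intro!: sum_nonneg)
    then have "lagr_flow (logit_flow mu) mu < lagr_flow Xs mu"
      using lagr_flow_excess_eq_kl[OF Xs] eps_pos by (simp add: algebra_simps)
    moreover have "lagr_flow Xs mu \<le> lagr_flow (logit_flow mu) mu"
      using min logit_flow_in_S by blast
    ultimately show False by simp
  qed
next
  assume eq: "\<forall>i<m. \<forall>j<n. Xs i j = logit_flow mu i j"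
  show "\<forall>X. inS n m r X \<longrightarrow> lagr_flow Xs mu \<le> lagr_flow X mu"
  proof (intro allI impI)
    fix X assume X: "inS n m r X"
    have "eps * (\<Sum>i<m. \<Sum>j<n. kl_term (X i j) (logit_flow mu i j)) \<ge> 0"
      using X r_pos delta_pos[OF n_pos] eps_pos
      by (intro mult_nonneg_nonneg sum_nonneg kl_term_nonneg) (auto simp: inS_def)
    moreover have "(\<Sum>i<m. \<Sum>j<n. kl_term (Xs i j) (logit_flow mu i j)) = 0"
      using eq by simp
    ultimately show "lagr_flow Xs mu \<le> lagr_flow X mu"
      using lagr_flow_excess_eq_kl[OF X, of mu] lagr_flow_excess_eq_kl[OF Xs, of mu]
      by simp
  qed
qed

lemma lagr_queue_min_iff:
  "(\<forall>q. lagr_queue qs mu \<le> lagr_queue q mu) \<longleftrightarrow> (\<forall>j<n. mu j = mu_fn T (c j) (qs j))"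
  unfolding lagr_queue_def
    sum_separable_min_iff[where f = "\<lambda>j t. beta (c j) t - mu j * t / T" and x = qs]
  using beta_minus_linear_min_iff[OF c_pos T_pos] by auto

lemma lagr_max_iff:
  "(\<forall>mu. lagr n m kappa c T eps r X q mu \<le> lagr n m kappa c T eps r X q mus)
     \<longleftrightarrow> (\<forall>j<n. (\<Sum>i<m. X i j) = q j / T)"
  unfolding lagr_def
  using sum_linear_max_iff[where a = "\<lambda>j. (\<Sum>i<m. X i j) - q j / T" and x = mus and n = n]
  by simp

lemma saddle_point_iff_equilibrium:
  "saddle_point n m kappa c T eps r Xs qs mus \<longleftrightarrow> equilibrium n m kappa c T eps r Xs qs mus"
proof -
  let ?balanced = "\<forall>j<n. (\<Sum>i<m. Xs i j) = qs j / T"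
  have "saddle_point n m kappa c T eps r Xs qs mus \<longleftrightarrow> inS n m r Xs
      \<and> (\<forall>X. inS n m r X \<longrightarrow> lagr_flow Xs mus \<le> lagr_flow X mus)
      \<and> (\<forall>q. lagr_queue qs mus \<le> lagr_queue q mus) \<and> ?balanced"
    unfolding saddle_point_def lagr_max_iff unfolding lagr_eq_flow_plus_queue
    using separable_add_min_iff[where P = "inS n m r" and f = "\<lambda>X. lagr_flow X mus"
        and g = "\<lambda>q. lagr_queue q mus" and x = Xs and w = qs]
    by blast
  also have "\<dots> \<longleftrightarrow> inS n m r Xs \<and> (\<forall>i<m. \<forall>j<n. Xs i j = logit_flow mus i j)
      \<and> (\<forall>j<n. mus j = mu_fn T (c j) (qs j)) \<and> ?balanced"
    using lagr_flow_min_iff lagr_queue_min_iff by blast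
  also have "\<dots> \<longleftrightarrow> equilibrium n m kappa c T eps r Xs qs mus"
    unfolding equilibrium_def using logit_flow_in_S[of mus] by (auto simp: inS_def)
  finally show ?thesis .
qed

end

section \<open>Equilibrium prices\<close>

lemma mono_box_map_has_fixed_point:
  fixes f :: "(nat \<Rightarrow> 'a::conditionally_complete_linorder) \<Rightarrow> nat \<Rightarrow> 'a"
  assumes bounds: "\<And>x k. k < n \<Longrightarrow> a \<le> f x k \<and> f x k \<le> b"
    and mono: "\<And>x y k. \<forall>i<n. x i \<le> y i \<Longrightarrow> k < n \<Longrightarrow> f x k \<le> f y k"
  shows "\<exists>x. \<forall>k<n. x k = f x k"
proof -
  define A where "A = {x. \<forall>k<n. x k \<le> f x k}"
  define s where "s k = Sup ((\<lambda>x. x k) ` A)" for k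
  have bottom: "(\<lambda>_. a) \<in> A" using bounds by (simp add: A_def)
  have bdd: "bdd_above ((\<lambda>x. x k) ` A)" if "k < n" for k
  proof (rule bdd_aboveI)
    fix y assume "y \<in> (\<lambda>x. x k) ` A"
    then obtain x where "x \<in> A" "y = x k" by blast
    then have "y \<le> f x k" using that by (simp add: A_def)
    also have "\<dots> \<le> b" using bounds[OF that] by simp
    finally show "y \<le> b" .
  qed
  have s_eq: "s k = Sup ((\<lambda>x. x k) ` A)" for k
    by (simp add: s_def)
  have upper: "x k \<le> s k" if "x \<in> A" "k < n" for x k
    unfolding s_eq using that bdd by (intro cSup_upper) auto
  have s_le: "s k \<le> f s k" if "k < n" for k
  proof -
    have "Sup ((\<lambda>x. x k) ` A) \<le> f s k"
    proof (rule cSup_least)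
      show "(\<lambda>x. x k) ` A \<noteq> {}" using bottom by blast
      fix y assume "y \<in> (\<lambda>x. x k) ` A"
      then obtain x where x: "x \<in> A" "y = x k" by blast
      then have "x k \<le> f x k" using that by (simp add: A_def)
      also have "\<dots> \<le> f s k" using upper[OF x(1)] that by (intro mono) auto
      finally show "y \<le> f s k" using x by simp
    qed
    then show ?thesis by (simp only: s_eq)
  qed
  then have "f s \<in> A" by (auto simp: A_def intro: mono)
  then have "f s k \<le> s k" if "k < n" for k using upper that by blast
  then show ?thesis using s_le by (blast intro: order_antisym)
qed

context charging_network
begin

definition demand :: "(nat \<Rightarrow> real) \<Rightarrow> nat \<Rightarrow> real" where
  "demand mu j = (\<Sum>i<m. logit_flow mu i j)"

definition price_consistent :: "(nat \<Rightarrow> real) \<Rightarrow> nat \<Rightarrow> bool" where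
  "price_consistent mu j \<longleftrightarrow> mu j = mu_fn T (c j) (T * demand mu j)"

definition price_equilibrium :: "(nat \<Rightarrow> real) \<Rightarrow> bool" where
  "price_equilibrium mu \<longleftrightarrow> (\<forall>j<n. price_consistent mu j)"

lemma equilibrium_iff_price_equilibrium:
  "equilibrium n m kappa c T eps r X q mu \<longleftrightarrow> price_equilibrium mu
     \<and> (\<forall>i<m. \<forall>j<n. X i j = logit_flow mu i j) \<and> (\<forall>j<n. q j = T * demand mu j)"
proof -
  have balance: "(\<Sum>i<m. X i j) = q j / T \<longleftrightarrow> q j = T * demand mu j"
    if "\<forall>i<m. \<forall>j<n. X i j = logit_flow mu i j" "j < n" for j
    using that T_pos by (auto simp: demand_def field_simps)
  show ?thesis
  proof
    assume "equilibrium n m kappa c T eps r X q mu"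
    then have mu: "\<forall>j<n. mu j = mu_fn T (c j) (q j)"
      and X: "\<forall>i<m. \<forall>j<n. X i j = logit_flow mu i j"
      and "\<forall>j<n. (\<Sum>i<m. X i j) = q j / T"
      unfolding equilibrium_def by auto
    then have "\<forall>j<n. q j = T * demand mu j" using balance by auto
    with mu X show "price_equilibrium mu \<and> (\<forall>i<m. \<forall>j<n. X i j = logit_flow mu i j)
        \<and> (\<forall>j<n. q j = T * demand mu j)"
      by (auto simp: price_equilibrium_def price_consistent_def)
  next
    assume "price_equilibrium mu \<and> (\<forall>i<m. \<forall>j<n. X i j = logit_flow mu i j)
        \<and> (\<forall>j<n. q j = T * demand mu j)"
    then show "equilibrium n m kappa c T eps r X q mu"
      using balance by (simp add: equilibrium_def price_equilibrium_def price_consistent_def)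
  qed
qed

lemma price_consistent_le:
  assumes j: "j < n" and "price_consistent nu j" and "price_consistent nu' j"
    and relative: "\<forall>k<n. nu' j - nu' k \<le> nu j - nu k"
  shows "nu j \<le> nu' j"
proof -
  have "demand nu j \<le> demand nu' j"
    unfolding demand_def using r_pos delta_mono[OF j eps_pos relative]
    by (intro sum_mono mult_left_mono) (auto simp: less_imp_le)
  then have "mu_fn T (c j) (T * demand nu j) \<le> mu_fn T (c j) (T * demand nu' j)"
    using T_pos c_pos[OF j] by (intro monoD[OF mu_fn_mono]) auto
  then show ?thesis using assms by (simp add: price_consistent_def)
qed

lemma price_equilibrium_le:
  assumes "price_equilibrium mu" "price_equilibrium mu'"
  shows "\<forall>k<n. mu k \<le> mu' k"
proof -
  have "\<exists>j<n. \<forall>k<n. mu k - mu' k \<le> mu j - mu' j"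
  proof -
    let ?D = "(\<lambda>k. mu k - mu' k) ` {..<n}"
    have "Max ?D \<in> ?D" using n_pos by (intro Max_in) (auto simp: lessThan_empty_iff)
    then obtain j where j: "j < n" "Max ?D = mu j - mu' j" by auto
    have "mu k - mu' k \<le> mu j - mu' j" if "k < n" for k
      using Max_ge[of ?D "mu k - mu' k"] j that by auto
    then show ?thesis using j by blast
  qed
  then obtain j where j: "j < n" and max: "\<forall>k<n. mu k - mu' k \<le> mu j - mu' j"
    by blast
  have "mu j \<le> mu' j"
    using assms j max by (intro price_consistent_le[OF j]) (auto simp: price_equilibrium_def)
  then show ?thesis using max by force
qed

lemma price_equilibrium_unique:
  "price_equilibrium mu \<Longrightarrow> price_equilibrium mu' \<Longrightarrow> \<forall>k<n. mu' k = mu k"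
  using price_equilibrium_le[of mu mu'] price_equilibrium_le[of mu' mu] by force

lemma continuous_on_demand_update: "continuous_on A (\<lambda>t. demand (mu(j := t)) j)"
proof -
  have "continuous_on A (\<lambda>t. (mu(j := t)) k)" for k
    by (cases "k = j") (auto intro: continuous_intros)
  moreover have "(\<Sum>k<n. exp (- (kappa i k + (mu(j := t)) k) / eps)) \<noteq> 0" for i t
    using sum_exp_pos[OF n_pos] by (metis less_irrefl)
  ultimately show ?thesis
    unfolding demand_def delta_def by (intro continuous_intros) (use eps_pos in auto)
qed

definition own_price_response :: "(nat \<Rightarrow> real) \<Rightarrow> nat \<Rightarrow> real" where
  "own_price_response mu j = (SOME t. 0 \<le> t \<and> t \<le> T \<and> price_consistent (mu(j := t)) j)"

lemma own_price_response:
  assumes j: "j < n"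
  shows "0 \<le> own_price_response mu j \<and> own_price_response mu j \<le> T
    \<and> price_consistent (mu(j := own_price_response mu j)) j"
proof -
  let ?g = "\<lambda>t. t - mu_fn T (c j) (T * demand (mu(j := t)) j)"
  have "\<exists>t. 0 \<le> t \<and> t \<le> T \<and> ?g t = 0"
  proof (rule IVT')
    show "?g 0 \<le> 0" using mu_fn_nonneg[OF c_pos[OF j] T_pos] by simp
    show "0 \<le> ?g T" using mu_fn_less[OF c_pos[OF j] T_pos] by (simp add: less_imp_le)
    have "continuous_on {0..T} (\<lambda>t. T * demand (mu(j := t)) j)"
      by (intro continuous_intros continuous_on_demand_update)
    then have "continuous_on {0..T} (\<lambda>t. mu_fn T (c j) (T * demand (mu(j := t)) j))"
      by (rule continuous_on_compose2[OF continuous_on_mu_fn[OF c_pos[OF j]] _ subset_UNIV])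
    then show "continuous_on {0..T} ?g" by (intro continuous_intros)
  qed (use T_pos in simp)
  then have "\<exists>t. 0 \<le> t \<and> t \<le> T \<and> price_consistent (mu(j := t)) j"
    by (simp add: price_consistent_def)
  then show ?thesis
    unfolding own_price_response_def by (rule someI_ex)
qed

lemma own_price_response_mono:
  assumes le: "\<forall>k<n. mu k \<le> mu' k" and j: "j < n"
  shows "own_price_response mu j \<le> own_price_response mu' j"
proof (rule ccontr)
  define t t' where "t = own_price_response mu j" and "t' = own_price_response mu' j"
  assume "\<not> own_price_response mu j \<le> own_price_response mu' j"
  then have "t' < t" by (simp add: t_def t'_def)
  have "(mu(j := t)) j \<le> (mu'(j := t')) j"
  proof (rule price_consistent_le[OF j, where nu = "mu(j := t)" and nu' = "mu'(j := t')"])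
    show "price_consistent (mu(j := t)) j" "price_consistent (mu'(j := t')) j"
      using own_price_response[OF j] by (simp_all add: t_def t'_def)
    show "\<forall>k<n. (mu'(j := t')) j - (mu'(j := t')) k \<le> (mu(j := t)) j - (mu(j := t)) k"
      using le \<open>t' < t\<close> by auto
  qed
  then show False using \<open>t' < t\<close> by simp
qed

lemma price_equilibrium_exists: "\<exists>mu. price_equilibrium mu"
proof -
  obtain mu where "\<forall>k<n. mu k = own_price_response mu k"
    using mono_box_map_has_fixed_point[of n 0 own_price_response T]
      own_price_response own_price_response_mono by blast
  then have "price_consistent mu k" if "k < n" for k
    using own_price_response[OF that, of mu] that by (metis fun_upd_triv)
  then show ?thesis by (auto simp: price_equilibrium_def)
qed

lemma equilibrium_exists: "\<exists>X q mu. equilibrium n m kappa c T eps r X q mu"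
proof -
  obtain mu where "price_equilibrium mu" using price_equilibrium_exists by blast
  then have "equilibrium n m kappa c T eps r (logit_flow mu) (\<lambda>j. T * demand mu j) mu"
    by (simp add: equilibrium_iff_price_equilibrium)
  then show ?thesis by blast
qed

lemma equilibrium_unique:
  assumes "equilibrium n m kappa c T eps r X q mu" "equilibrium n m kappa c T eps r X' q' mu'"
  shows "(\<forall>i<m. \<forall>j<n. X' i j = X i j) \<and> (\<forall>j<n. q' j = q j \<and> mu' j = mu j)"
proof -
  have same: "\<forall>k<n. mu' k = mu k"
    using assms price_equilibrium_unique by (simp add: equilibrium_iff_price_equilibrium)
  then have "delta n kappa eps mu' i j = delta n kappa eps mu i j" if "j < n" for i j
    using delta_cong that by blast
  moreover from this have "demand mu' j = demand mu j" if "j < n" for j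
    using that by (simp add: demand_def)
  ultimately show ?thesis
    using assms same by (simp add: equilibrium_iff_price_equilibrium)
qed

end

theorem theorem1:
  fixes n m :: nat and c r mu_s q_s :: "nat \<Rightarrow> real" and T eps :: real
    and kappa X_s :: "nat \<Rightarrow> nat \<Rightarrow> real"
  assumes "n \<ge> 1" and "m \<ge> 1"
    and "\<forall>j<n. c j > 0" and "T > 0" and "eps > 0"
    and "\<forall>i<m. r i > 0"
    and "\<forall>i<m. \<forall>j<n. kappa i j \<ge> 0"
  shows "(saddle_point n m kappa c T eps r X_s q_s mu_s
            \<longleftrightarrow> equilibrium n m kappa c T eps r X_s q_s mu_s)
       \<and> (\<exists>X q mu. equilibrium n m kappa c T eps r X q mu
            \<and> (\<forall>X' q' mu'. equilibrium n m kappa c T eps r X' q' mu' \<longrightarrow>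
                 (\<forall>i<m. \<forall>j<n. X' i j = X i j) \<and> (\<forall>j<n. q' j = q j \<and> mu' j = mu j)))"
proof -
  interpret charging_network n m kappa c r T eps
    using assms by unfold_locales auto
  obtain X q mu where "equilibrium n m kappa c T eps r X q mu"
    using equilibrium_exists by blast
  then show ?thesis using saddle_point_iff_equilibrium equilibrium_unique by blast
qed

end
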